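(* The only pairs of natural numbers $(x,y)$ (with $0 \in \mathbb{N}$) such that $3^x-2^y$ is a perfect square are $(0,0),(1,1),(2,3),(3,1),(4,5)$.
   Context: Here $\mathbb{N}=\{0,1,2,\dots\}$, and a perfect square means $n^2$ for some $n\in\mathbb{N}$. *)

theory Defs
  imports Main
begin

end

theory Submission
  imports Defs "HOL-Computational_Algebra.Primes"
begin

text \<open>
  Write the equation as \<open>3^x = n^2 + 2^y\<close>. For \<open>y = 0\<close>, squares modulo 3 leave only \<open>x = 0\<close>.
  For \<open>y \<ge> 2\<close>, reduction modulo 4 makes \<open>x = 2k\<close> even, and \<open>(3^k - n)(3^k + n) = 2^y\<close>
  forces \<open>3^k - n = 2\<close>, hence \<open>3^k = 2^(y-2) + 1\<close>, whose only solutions are \<open>k = 1, 2\<close>.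

  For \<open>y = 1\<close> we work in \<open>\<int>[\<surd>-2]\<close>, where \<open>3 = (1 + \<surd>-2)(1 - \<surd>-2)\<close>. By descent, every
  coprime solution of \<open>a^2 + 2b^2 = 3^x\<close> is \<open>\<pm>(1 + \<surd>-2)^x\<close> or its conjugate, so \<open>n^2 + 2 = 3^x\<close>
  forces the \<open>\<surd>-2\<close>-coefficient of \<open>(1 + \<surd>-2)^x\<close> to be \<open>\<pm>1\<close>. For \<open>m > 0\<close>,
  \<open>(1 + \<surd>-2)^(8m) = 1 + 2^K (g1 + g2\<surd>-2)\<close> with \<open>K \<ge> 3\<close>, \<open>g1\<close> even and \<open>g2\<close> odd, so
  passing from \<open>x mod 8\<close> to \<open>x\<close> changes the coefficient by a nonzero multiple of 8; the
  eight residues \<open>x < 8\<close> then leave only \<open>x \<in> {1, 3}\<close>.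
\<close>

section \<open>The cases \<open>y \<noteq> 1\<close>\<close>

lemma three_pow_mod4: "(3::nat) ^ x mod 4 = (if even x then 1 else 3)"
proof (induction x)
  case (Suc x)
  have "3 ^ Suc x mod 4 = 3 * (3 ^ x mod 4) mod (4::nat)"
    by (simp add: mod_mult_right_eq)
  with Suc show ?case
    by simp
qed simp

lemma square_mod4: "(n::nat)\<^sup>2 mod 4 \<in> {0, 1}"
proof -
  have "n\<^sup>2 mod 4 = (n mod 4)\<^sup>2 mod 4"
    by (simp add: power_mod)
  moreover have "n mod 4 = 0 \<or> n mod 4 = 1 \<or> n mod 4 = 2 \<or> n mod 4 = 3"
    by arith
  ultimately show ?thesis
    by (auto simp: power2_eq_square)
qed

lemma square_mod3: "(n::nat)\<^sup>2 mod 3 \<in> {0, 1}"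
proof -
  have "n\<^sup>2 mod 3 = (n mod 3)\<^sup>2 mod 3"
    by (simp add: power_mod)
  moreover have "n mod 3 = 0 \<or> n mod 3 = 1 \<or> n mod 3 = 2"
    by arith
  ultimately show ?thesis
    by (auto simp: power2_eq_square)
qed

lemma dvd_pow2_iff: "d dvd (2::nat) ^ c \<longleftrightarrow> (\<exists>i\<le>c. d = 2 ^ i)"
  using divides_primepow_nat[of 2 d c] by simp

lemma odd_square_eq_square_plus_pow2:
  fixes w d c :: nat
  assumes "odd w" "0 < d" "w\<^sup>2 = d\<^sup>2 + 2 ^ c"
  shows "w = d + 2"
proof -
  have "d\<^sup>2 < w\<^sup>2"
    using assms(3) by simp
  then have "d < w"
    using power_less_imp_less_base by blast
  then obtain u where w: "w = d + u"
    using less_imp_add_positive by blast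
  have "u * (u + 2 * d) = 2 ^ c"
    using assms(3) unfolding w by (simp add: power2_eq_square algebra_simps)
  then obtain i j where i: "u = 2 ^ i" and j: "u + 2 * d = 2 ^ j"
    by (metis dvd_pow2_iff dvd_triv_left dvd_triv_right)
  have "(2::nat) ^ i < 2 ^ j"
    unfolding i[symmetric] j[symmetric] using \<open>0 < d\<close> by simp
  then have "i < j"
    by simp
  have sum: "2 * w = 2 ^ i + 2 ^ j"
    using i j unfolding w by simp
  have "i = 1"
  proof (rule ccontr)
    assume "i \<noteq> 1"
    show False
    proof (cases "i = 0")
      case True
      have "even ((2::nat) ^ j)"
        using \<open>i < j\<close> by simp
      moreover have "2 * w = 2 ^ j + 1"
        using sum True by simp
      ultimately show False
        by presburger
    next
      case False
      with \<open>i \<noteq> 1\<close> \<open>i < j\<close> have "2 \<le> i" "2 \<le> j"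
        by auto
      then have "(4::nat) dvd 2 ^ i" "(4::nat) dvd 2 ^ j"
        using le_imp_power_dvd[of 2 _ "2::nat"] by auto
      then have "(4::nat) dvd 2 * w"
        using sum by simp
      then show False
        using \<open>odd w\<close> by presburger
    qed
  qed
  then show ?thesis
    using i w by simp
qed

lemma three_pow_eq_pow2_plus_one:
  fixes k c :: nat
  assumes "(3::nat) ^ k = 2 ^ c + 1"
  shows "(k, c) = (1, 1) \<or> (k, c) = (2, 3)"
proof (cases "even k")
  case True
  then obtain m where k: "k = 2 * m"
    by blast
  have "(3 ^ m)\<^sup>2 = 1\<^sup>2 + (2::nat) ^ c"
    using assms unfolding k power_even_eq by simp
  then have "(3::nat) ^ m = 3 ^ 1"
    using odd_square_eq_square_plus_pow2[of "3 ^ m" 1 c] by simp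
  then have "m = 1"
    using power_inject_exp[of "3::nat" m 1] by simp
  with assms have "(2::nat) ^ c = 2 ^ 3"
    by (simp add: k)
  then have "c = 3"
    using power_inject_exp[of "2::nat" c 3] by simp
  with \<open>m = 1\<close> k show ?thesis
    by simp
next
  case False
  then have mod4: "(2 ^ c + 1) mod 4 = (3::nat)"
    using assms three_pow_mod4[of k] by simp
  have "c = 1"
  proof (rule ccontr)
    assume "c \<noteq> 1"
    moreover have "c \<noteq> 0"
      using mod4 by (intro notI) simp
    ultimately obtain d where "c = d + 2"
      by (metis add_2_eq_Suc' not0_implies_Suc One_nat_def)
    then have "(4 * 2 ^ d + 1) mod 4 = (3::nat)"
      using mod4 by (simp add: power_add mult.commute)
    then show False
      by presburger
  qed
  then have "(3::nat) ^ k = 3 ^ 1"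
    using assms by simp
  then have "k = 1"
    using power_inject_exp[of "3::nat" k 1] by simp
  with \<open>c = 1\<close> show ?thesis
    by simp
qed

lemma three_pow_eq_square_plus_one:
  fixes x n :: nat
  assumes "3 ^ x = n\<^sup>2 + 1"
  shows "x = 0"
proof (rule ccontr)
  assume "x \<noteq> 0"
  have not_dvd: "\<not> 3 dvd t + 1" if "t mod 3 \<in> {0, 1}" for t :: nat
    using that by auto presburger+
  have "3 dvd n\<^sup>2 + 1"
    unfolding assms[symmetric] using \<open>x \<noteq> 0\<close> by simp
  with not_dvd[OF square_mod3[of n]] show False
    by contradiction
qed

lemma three_pow_eq_square_plus_pow2:
  fixes x n y :: nat
  assumes eq: "3 ^ x = n\<^sup>2 + 2 ^ y" and "2 \<le> y"
  shows "(x, y) = (2, 3) \<or> (x, y) = (4, 5)"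
proof -
  define e where "e = y - 2"
  have "y = e + 2"
    using \<open>2 \<le> y\<close> unfolding e_def by simp
  then have pow2_y: "(2::nat) ^ y = 4 * 2 ^ e"
    by (simp add: power_add mult.commute)
  have "even x"
  proof (rule ccontr)
    assume "odd x"
    then have "(n\<^sup>2 + 4 * 2 ^ e) mod 4 = 3"
      using eq three_pow_mod4[of x] by (simp add: pow2_y)
    moreover have "(n\<^sup>2 + 4 * 2 ^ e) mod 4 = n\<^sup>2 mod 4"
      by simp
    ultimately show False
      using square_mod4[of n] by simp
  qed
  then obtain k where x: "x = 2 * k"
    by blast
  have sq: "(3 ^ k)\<^sup>2 = n\<^sup>2 + (2::nat) ^ y"
    using eq unfolding x power_even_eq .
  have "n \<noteq> 0"
  proof
    assume "n = 0"
    then have "even ((3::nat) ^ x)"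
      using eq \<open>2 \<le> y\<close> by simp
    then show False
      by simp
  qed
  then have "3 ^ k = n + 2"
    using odd_square_eq_square_plus_pow2[OF _ _ sq] by simp
  moreover have "(n + 2)\<^sup>2 = n\<^sup>2 + 4 * (n + 1)"
    by (simp add: power2_eq_square algebra_simps)
  ultimately have "n + 1 = 2 ^ e"
    using sq pow2_y by simp
  with \<open>3 ^ k = n + 2\<close> have "(3::nat) ^ k = 2 ^ e + 1"
    by simp
  then have "(k, e) = (1, 1) \<or> (k, e) = (2, 3)"
    by (rule three_pow_eq_pow2_plus_one)
  with x \<open>2 \<le> y\<close> show ?thesis
    unfolding e_def by auto
qed

section \<open>The ring \<open>\<int>[\<surd>-2]\<close>\<close>

text \<open>\<open>ZSqrtm2 a b\<close> stands for \<open>a + b\<surd>-2\<close>; only the multiplicative structure is needed.\<close>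

datatype zsqrtm2 = ZSqrtm2 (re: int) (im: int)

instantiation zsqrtm2 :: comm_monoid_mult
begin

definition one_zsqrtm2 :: zsqrtm2 where
  "1 = ZSqrtm2 1 0"

definition times_zsqrtm2 :: "zsqrtm2 \<Rightarrow> zsqrtm2 \<Rightarrow> zsqrtm2" where
  "z * w = ZSqrtm2 (re z * re w - 2 * im z * im w) (re z * im w + im z * re w)"

instance
  by standard (simp_all add: one_zsqrtm2_def times_zsqrtm2_def algebra_simps)

end

lemma re_one [simp]: "re 1 = 1" and im_one [simp]: "im 1 = 0"
  by (simp_all add: one_zsqrtm2_def)

lemma re_times [simp]: "re (z * w) = re z * re w - 2 * im z * im w"
  and im_times [simp]: "im (z * w) = re z * im w + im z * re w"
  by (simp_all add: times_zsqrtm2_def)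

definition pi3 :: zsqrtm2 where
  "pi3 = ZSqrtm2 1 1"

lemma re_pi3 [simp]: "re pi3 = 1" and im_pi3 [simp]: "im pi3 = 1"
  by (simp_all add: pi3_def)

lemma odd_re_pi3_pow: "odd (re (pi3 ^ x))"
  by (induction x) simp_all

lemma pi3_pow_8: "pi3 ^ 8 = ZSqrtm2 17 56"
  by (simp add: pi3_def times_zsqrtm2_def eval_nat_numeral)

lemma im_pi3_pow_less_8:
  assumes "x < 8"
  shows "im (pi3 ^ x) \<in> {-11, -10, -4, 0, 1, 2, 13}"
proof -
  have "x = 0 \<or> x = 1 \<or> x = 2 \<or> x = 3 \<or> x = 4 \<or> x = 5 \<or> x = 6 \<or> x = 7"
    using assms by arith
  then show ?thesis
    by (auto simp: pi3_def times_zsqrtm2_def eval_nat_numeral)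
qed

lemma divide_by_pi3:
  fixes a b :: int
  assumes "coprime a b" "a\<^sup>2 + 2 * b\<^sup>2 = 3 ^ Suc x" "3 dvd a - b"
  obtains a' b' where "coprime a' b'" "a'\<^sup>2 + 2 * b'\<^sup>2 = 3 ^ x"
    "a = a' - 2 * b'" "b = a' + b'"
proof -
  obtain k where k: "a - b = 3 * k"
    using assms(3) by blast
  define a' b' where "a' = b + k" and "b' = - k"
  have a: "a = a' - 2 * b'" and b: "b = a' + b'"
    using k unfolding a'_def b'_def by simp_all
  have "3 * (a'\<^sup>2 + 2 * b'\<^sup>2) = 3 * 3 ^ x"
    using assms(2) unfolding a b by (simp add: algebra_simps power2_eq_square)
  then have "a'\<^sup>2 + 2 * b'\<^sup>2 = 3 ^ x"
    by simp
  moreover have "coprime a' b'"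
  proof (rule coprimeI)
    fix c
    assume "c dvd a'" "c dvd b'"
    then have "c dvd a" "c dvd b"
      unfolding a b by simp_all
    with \<open>coprime a b\<close> show "is_unit c"
      using coprime_common_divisor by blast
  qed
  ultimately show ?thesis
    using that a b by blast
qed

text \<open>These are the coordinates of \<open>conj (pi3 ^ x) * pi3 = 3 * conj (pi3 ^ (x - 1))\<close>.\<close>

lemma three_dvd_pi3_pow_conj_times_pi3:
  assumes "0 < x"
  shows "3 dvd re (pi3 ^ x) + 2 * im (pi3 ^ x)" "3 dvd re (pi3 ^ x) - im (pi3 ^ x)"
proof -
  obtain y where "x = Suc y"
    using assms gr0_implies_Suc by blast
  then have "re (pi3 ^ x) + 2 * im (pi3 ^ x) = 3 * re (pi3 ^ y)"
    "re (pi3 ^ x) - im (pi3 ^ x) = 3 * (- im (pi3 ^ y))"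
    by simp_all
  then show "3 dvd re (pi3 ^ x) + 2 * im (pi3 ^ x)" "3 dvd re (pi3 ^ x) - im (pi3 ^ x)"
    by (metis dvd_triv_left)+
qed

lemma norm_eq_pow3_imp_abs_pi3_pow:
  fixes a b :: int
  assumes "coprime a b" "a\<^sup>2 + 2 * b\<^sup>2 = 3 ^ x"
  shows "\<bar>a\<bar> = \<bar>re (pi3 ^ x)\<bar> \<and> \<bar>b\<bar> = \<bar>im (pi3 ^ x)\<bar>"
  using assms
proof (induction x arbitrary: a b)
  case 0
  then have "a\<^sup>2 + 2 * b\<^sup>2 = 1"
    by simp
  then have "2 * b\<^sup>2 \<le> 1"
    using zero_le_power2[of a] by linarith
  then have "b\<^sup>2 = 0"
    using zero_le_power2[of b] by linarith
  then have "b = 0"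
    by simp
  with 0 show ?case
    by (simp add: power2_eq_1_iff)
next
  case (Suc x)
  define p q where "p = re (pi3 ^ x)" and "q = im (pi3 ^ x)"
  have step: "\<bar>a\<bar> = \<bar>re (pi3 ^ Suc x)\<bar> \<and> \<bar>b\<bar> = \<bar>im (pi3 ^ Suc x)\<bar>"
    if hyps: "coprime a b" "a\<^sup>2 + 2 * b\<^sup>2 = 3 ^ Suc x" "3 dvd a - b" for a b :: int
  proof -
    obtain a' b' where ab': "coprime a' b'" "a'\<^sup>2 + 2 * b'\<^sup>2 = 3 ^ x"
      and a: "a = a' - 2 * b'" and b: "b = a' + b'"
      using divide_by_pi3[OF hyps] .
    from Suc.IH[OF ab'] have "a' = p \<or> a' = - p" "b' = q \<or> b' = - q"
      unfolding p_def q_def by (auto simp: abs_eq_iff)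
    txt \<open>Matching signs give \<open>\<pm>pi3 ^ Suc x\<close>, opposite signs \<open>\<pm>conj (pi3 ^ x) * pi3\<close>.\<close>
    then consider "\<bar>a\<bar> = \<bar>p - 2 * q\<bar>" "\<bar>b\<bar> = \<bar>p + q\<bar>"
      | "\<bar>a\<bar> = \<bar>p + 2 * q\<bar>" "\<bar>b\<bar> = \<bar>p - q\<bar>"
      unfolding a b by (smt (verit))
    then show ?thesis
    proof cases
      case 1
      then show ?thesis
        by (simp add: p_def q_def)
    next
      case 2
      show ?thesis
      proof (cases "x = 0")
        case True
        with 2 show ?thesis
          by (simp add: p_def q_def)
      next
        case False
        then have "3 dvd \<bar>a\<bar>" "3 dvd \<bar>b\<bar>"
          using 2 three_dvd_pi3_pow_conj_times_pi3[of x] by (simp_all add: p_def q_def)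
        then have "3 dvd a" "3 dvd b"
          by simp_all
        with \<open>coprime a b\<close> have "is_unit (3::int)"
          using coprime_common_divisor by blast
        then show ?thesis
          by simp
      qed
    qed
  qed
  have "(a - b) * (a + b) = (a\<^sup>2 + 2 * b\<^sup>2) - 3 * b\<^sup>2"
    by (simp add: algebra_simps power2_eq_square)
  also have "\<dots> = 3 * (3 ^ x - b\<^sup>2)"
    using Suc.prems(2) by simp
  finally have "3 dvd (a - b) * (a + b)"
    by simp
  then have "3 dvd a - b \<or> 3 dvd a - (- b)"
    using prime_dvd_mult_iff[of "3::int"] by simp
  then show ?case
    using step[of a b] step[of a "- b"] Suc.prems by auto
qed

section \<open>Powers of \<open>1 + \<surd>-2\<close> modulo powers of 2\<close>

text \<open>
  \<open>near_one K z\<close>: \<open>z = 1 + 2^K (g1 + g2\<surd>-2)\<close> with \<open>g1\<close> even and \<open>g2\<close> odd, i.e.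
  \<open>z \<equiv> 1 (mod 2^(K+1))\<close> while \<open>im z\<close> has 2-adic valuation exactly \<open>K\<close>.
\<close>

definition near_one :: "nat \<Rightarrow> zsqrtm2 \<Rightarrow> bool" where
  "near_one K z \<longleftrightarrow>
     (\<exists>g1 g2. re z = 1 + 2 ^ K * g1 \<and> im z = 2 ^ K * g2 \<and> even g1 \<and> odd g2)"

lemma near_one_square:
  assumes "near_one K z" "1 \<le> K"
  shows "near_one (Suc K) (z\<^sup>2)"
proof -
  obtain g1 g2 where z: "re z = 1 + 2 ^ K * g1" "im z = 2 ^ K * g2" and "even g1" "odd g2"
    using assms(1) unfolding near_one_def by blast
  obtain h where h: "g1 = 2 * h"
    using \<open>even g1\<close> by blast
  define t :: int where "t = 2 ^ K"
  have "even t"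
    using assms(2) unfolding t_def by simp
  have "re (z\<^sup>2) = 1 + 2 ^ Suc K * (g1 + t * (g1 * h - g2\<^sup>2))"
    "im (z\<^sup>2) = 2 ^ Suc K * (g2 * (1 + t * g1))"
    unfolding power2_eq_square re_times im_times z t_def[symmetric] h
    by (simp_all add: algebra_simps t_def)
  moreover have "even (g1 + t * (g1 * h - g2\<^sup>2))" "odd (g2 * (1 + t * g1))"
    using \<open>even g1\<close> \<open>odd g2\<close> \<open>even t\<close> by simp_all
  ultimately show ?thesis
    unfolding near_one_def by blast
qed

lemma near_one_mult:
  assumes "near_one K u" "near_one L v" "K < L"
  shows "near_one K (u * v)"
proof -
  obtain g1 g2 where u: "re u = 1 + 2 ^ K * g1" "im u = 2 ^ K * g2" and "even g1" "odd g2"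
    using assms(1) unfolding near_one_def by blast
  obtain h1 h2 where v: "re v = 1 + 2 ^ L * h1" "im v = 2 ^ L * h2"
    using assms(2) unfolding near_one_def by blast
  define t :: int where "t = 2 ^ K"
  define r :: int where "r = 2 ^ (L - Suc K)"
  have "(2::int) ^ L = 2 ^ (Suc K + (L - Suc K))"
    using \<open>K < L\<close> by simp
  also have "\<dots> = 2 * t * r"
    unfolding t_def r_def power_add by simp
  finally have "re (u * v) = 1 + t * (g1 + 2 * r * h1 + 2 * t * g1 * r * h1 - 4 * t * g2 * r * h2)"
    "im (u * v) = t * (2 * r * h2 * (1 + t * g1) + g2 + 2 * t * r * g2 * h1)"
    unfolding re_times im_times u v t_def[symmetric] by (simp_all add: algebra_simps)
  moreover have "even (g1 + 2 * r * h1 + 2 * t * g1 * r * h1 - 4 * t * g2 * r * h2)"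
    "odd (2 * r * h2 * (1 + t * g1) + g2 + 2 * t * r * g2 * h1)"
    using \<open>even g1\<close> \<open>odd g2\<close> by simp_all
  ultimately show ?thesis
    unfolding near_one_def t_def by blast
qed

lemma near_one_pi3_pow_8_power:
  assumes "0 < m"
  shows "\<exists>K\<ge>3. near_one K ((pi3 ^ 8) ^ m)"
  using assms
proof (induction m rule: less_induct)
  case (less m)
  have base: "near_one 3 (pi3 ^ 8)"
    unfolding near_one_def pi3_pow_8 by (intro exI[of _ 2] exI[of _ 7]) simp
  have "m = 1 \<or> (\<exists>j. m = 2 * j \<and> 0 < j) \<or> (\<exists>j. m = 2 * j + 1 \<and> 0 < j)"
    using \<open>0 < m\<close> by presburger
  then consider "m = 1" | j where "m = 2 * j" "0 < j" | j where "m = 2 * j + 1" "0 < j"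
    by blast
  then show ?case
  proof cases
    case 1
    with base show ?thesis
      by auto
  next
    case (2 j)
    then obtain K where "3 \<le> K" "near_one K ((pi3 ^ 8) ^ j)"
      using less.IH[of j] by auto
    moreover have "(pi3 ^ 8) ^ m = ((pi3 ^ 8) ^ j)\<^sup>2"
      using 2 by (simp add: power_mult mult.commute)
    ultimately show ?thesis
      using near_one_square[of K] by (intro exI[of _ "Suc K"]) auto
  next
    case (3 j)
    then obtain K where "3 \<le> K" "near_one K ((pi3 ^ 8) ^ j)"
      using less.IH[of j] by auto
    then have "near_one (Suc K) (((pi3 ^ 8) ^ j)\<^sup>2)"
      by (intro near_one_square) auto
    then have "near_one 3 (pi3 ^ 8 * ((pi3 ^ 8) ^ j)\<^sup>2)"
      using near_one_mult[OF base] \<open>3 \<le> K\<close> by auto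
    moreover have "(pi3 ^ 8) ^ m = pi3 ^ 8 * ((pi3 ^ 8) ^ j)\<^sup>2"
      using 3 by (simp add: power_mult mult.commute)
    ultimately show ?thesis
      by auto
  qed
qed

lemma abs_im_pi3_pow_eq_1:
  assumes "\<bar>im (pi3 ^ x)\<bar> = 1"
  shows "x = 1 \<or> x = 3"
proof (cases "x < 8")
  case True
  then have "x = 0 \<or> x = 1 \<or> x = 2 \<or> x = 3 \<or> x = 4 \<or> x = 5 \<or> x = 6 \<or> x = 7"
    by arith
  with assms show ?thesis
    by (auto simp: pi3_def times_zsqrtm2_def eval_nat_numeral)
next
  case False
  define r where "r = x mod 8"
  have pow_x: "pi3 ^ x = pi3 ^ r * (pi3 ^ 8) ^ (x div 8)"
    unfolding r_def power_mult[symmetric] power_add[symmetric] by simp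
  have "0 < x div 8"
    using False by simp
  then obtain K where "3 \<le> K" "near_one K ((pi3 ^ 8) ^ (x div 8))"
    using near_one_pi3_pow_8_power by blast
  then obtain g1 g2 where g: "re ((pi3 ^ 8) ^ (x div 8)) = 1 + 2 ^ K * g1"
    "im ((pi3 ^ 8) ^ (x div 8)) = 2 ^ K * g2" and "even g1" "odd g2"
    unfolding near_one_def by blast
  define b where "b = im (pi3 ^ r)"
  define w where "w = re (pi3 ^ r) * g2 + b * g1"
  have im_x: "im (pi3 ^ x) = b + 2 ^ K * w"
    unfolding pow_x b_def w_def by (simp add: g algebra_simps)
  have "odd w"
    using odd_re_pi3_pow[of r] \<open>even g1\<close> \<open>odd g2\<close> unfolding w_def by simp
  have "(8::int) dvd 2 ^ K"
    using le_imp_power_dvd[OF \<open>3 \<le> K\<close>, of "2::int"] by simp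
  then obtain c where "(2::int) ^ K = 8 * c"
    by blast
  then have mod8: "im (pi3 ^ x) mod 8 = b mod 8"
    unfolding im_x by (simp add: mult.assoc)
  have "b \<in> {-11, -10, -4, 0, 1, 2, 13}"
    unfolding b_def r_def by (rule im_pi3_pow_less_8) simp
  then have "b mod 8 \<in> {0, 1, 2, 4, 5, 6}" and b1: "b mod 8 = 1 \<Longrightarrow> b = 1"
    by auto
  show ?thesis
  proof (cases "im (pi3 ^ x) = 1")
    case True
    then have "b = 1"
      using mod8 b1 by simp
    then have "2 ^ K * w = 0"
      using True im_x by simp
    with \<open>odd w\<close> show ?thesis
      by simp
  next
    case False
    with assms have "im (pi3 ^ x) = -1"
      by arith
    then have "im (pi3 ^ x) mod 8 = 7"
      by simp
    with mod8 \<open>b mod 8 \<in> {0, 1, 2, 4, 5, 6}\<close> show ?thesis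
      by simp
  qed
qed

section \<open>The case \<open>y = 1\<close> and the theorem\<close>

lemma three_pow_eq_square_plus_two:
  fixes x n :: nat
  assumes "3 ^ x = n\<^sup>2 + 2"
  shows "x = 1 \<or> x = 3"
proof -
  have "(int n)\<^sup>2 + 2 * 1\<^sup>2 = 3 ^ x"
    using arg_cong[OF assms, of int] by simp
  then have "\<bar>im (pi3 ^ x)\<bar> = 1"
    using norm_eq_pow3_imp_abs_pi3_pow[of "int n" 1 x] by simp
  then show ?thesis
    by (rule abs_im_pi3_pow_eq_1)
qed

theorem mainTheorem1:
  fixes x y :: nat
  shows "(\<exists>n::nat. (3::int) ^ x - 2 ^ y = (int n) ^ 2) \<longleftrightarrow>
         (x, y) \<in> {(0, 0), (1, 1), (2, 3), (3, 1), (4, 5)}"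
proof
  assume "\<exists>n::nat. (3::int) ^ x - 2 ^ y = (int n) ^ 2"
  then obtain n :: nat where "(3::int) ^ x - 2 ^ y = (int n) ^ 2"
    by blast
  then have "int (3 ^ x) = int (n\<^sup>2 + 2 ^ y)"
    by simp
  then have eq: "3 ^ x = n\<^sup>2 + 2 ^ y"
    by (simp only: of_nat_eq_iff)
  consider "y = 0" | "y = 1" | "2 \<le> y"
    by arith
  then show "(x, y) \<in> {(0, 0), (1, 1), (2, 3), (3, 1), (4, 5)}"
  proof cases
    case 1
    with eq three_pow_eq_square_plus_one show ?thesis
      by simp
  next
    case 2
    with eq three_pow_eq_square_plus_two show ?thesis
      by fastforce
  next
    case 3
    with eq three_pow_eq_square_plus_pow2 show ?thesis
      by blast
  qed
next
  assume "(x, y) \<in> {(0, 0), (1, 1), (2, 3), (3, 1), (4, 5)}"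
  moreover have "(3::int) ^ 0 - 2 ^ 0 = int 0 ^ 2" "(3::int) ^ 1 - 2 ^ 1 = int 1 ^ 2"
    "(3::int) ^ 2 - 2 ^ 3 = int 1 ^ 2" "(3::int) ^ 3 - 2 ^ 1 = int 5 ^ 2"
    "(3::int) ^ 4 - 2 ^ 5 = int 7 ^ 2"
    by simp_all
  ultimately show "\<exists>n::nat. (3::int) ^ x - 2 ^ y = (int n) ^ 2"
    by blast
qed

end
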